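(* Let $P$ be a rooted forest on $[n]$ whose labeling is natural, let $x_1,\dots,x_n$ be strictly positive reals, and let $x_{\preceq i}=\sum_{j\preceq i}x_j$. Set $$Z_P=\prod_{i=1}^n\frac{x_{\preceq i}}{x_1+\cdots+x_i},\qquad w(\pi)=\prod_{i=1}^{n}\frac{x_1+\cdots+x_i}{x_{\pi_1}+\cdots+x_{\pi_i}}\quad(\pi\in\mathcal{L}(P)).$$ Then $Z_P$ is the partition function of the promotion graph, i.e. $\sum_{\pi\in\mathcal{L}(P)}Z_P\,w(\pi)=1$.
   Context: A rooted tree is a connected finite poset in which each element is covered by at most one element (has at most one successor); a rooted forest is a disjoint union of rooted trees. Natural labeling: $i\prec j$ implies $i<j$. $\mathcal{L}(P)=\{\pi\in S_n : i\prec j \Rightarrow \pi^{-1}_i<\pi^{-1}_j\}$, in one-line notation $\pi=\pi_1\cdots\pi_n$. (The function $w$ is the stationary state of the promotion graph Markov chain normalized by $w(e)=1$.) *)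

theory Defs
  imports "HOL-Analysis.Analysis" "HOL-Combinatorics.Permutations"
begin

text \<open>A finite poset on [n] = {1..n} is a relation R (pairs (i,j) meaning i \<preceq> j)
  that is a partial order on {1..n}.\<close>

definition strictly_below :: "(nat \<times> nat) set \<Rightarrow> nat \<Rightarrow> nat \<Rightarrow> bool" where
  "strictly_below R i j \<longleftrightarrow> (i, j) \<in> R \<and> i \<noteq> j"

definition covered_by :: "(nat \<times> nat) set \<Rightarrow> nat \<Rightarrow> nat \<Rightarrow> bool" where
  "covered_by R i j \<longleftrightarrow> strictly_below R i j \<and>
     \<not> (\<exists>k. strictly_below R i k \<and> strictly_below R k j)"

definition rooted_forest :: "nat \<Rightarrow> (nat \<times> nat) set \<Rightarrow> bool" where
  "rooted_forest n R \<longleftrightarrow> partial_order_on {1..n} R \<and>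
     (\<forall>i\<in>{1..n}. \<forall>j k. covered_by R i j \<and> covered_by R i k \<longrightarrow> j = k)"

definition natural_labeling :: "(nat \<times> nat) set \<Rightarrow> bool" where
  "natural_labeling R \<longleftrightarrow> (\<forall>i j. strictly_below R i j \<longrightarrow> i < j)"

text \<open>Linear extensions; a permutation \<pi> with one-line notation \<pi>_1 ... \<pi>_n is \<pi> 1, ..., \<pi> n.\<close>
definition linear_extensions :: "nat \<Rightarrow> (nat \<times> nat) set \<Rightarrow> (nat \<Rightarrow> nat) set" where
  "linear_extensions n R = {\<pi>. \<pi> permutes {1..n} \<and>
     (\<forall>i j. strictly_below R i j \<longrightarrow> inv \<pi> i < inv \<pi> j)}"

definition partition_Z :: "nat \<Rightarrow> (nat \<times> nat) set \<Rightarrow> (nat \<Rightarrow> real) \<Rightarrow> real" where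
  "partition_Z n R x = (\<Prod>i=1..n. (\<Sum>j\<in>{j. (j, i) \<in> R}. x j) / (\<Sum>j=1..i. x j))"

definition weight_w :: "nat \<Rightarrow> (nat \<Rightarrow> real) \<Rightarrow> (nat \<Rightarrow> nat) \<Rightarrow> real" where
  "weight_w n x \<pi> = (\<Prod>i=1..n. (\<Sum>j=1..i. x j) / (\<Sum>k=1..i. x (\<pi> k)))"

end

theory Submission
  imports Defs
begin

text \<open>
  Reading \<open>\<pi>\<close> as the list \<open>\<pi>\<^sub>1 \<dots> \<pi>\<^sub>n\<close>, the product \<open>Z\<^sub>P w(\<pi>)\<close> equals the product of
  the sums \<open>x\<^sub>\<preceq>\<^sub>i\<close> times the reciprocals of the prefix sums of \<open>x\<close> along \<open>\<pi>\<close>. The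
  theorem therefore is a weighted hook length formula for forests: summed over the linear
  extensions of a down-closed set \<open>S\<close>, the reciprocal prefix products add up to
  \<open>\<Prod>i\<in>S. 1 / x\<^sub>\<preceq>\<^sub>i\<close>. The last entry of a linear
  extension is a maximal element \<open>a\<close> and contributes the factor \<open>1 / x(S)\<close>, while by induction
  the extensions of \<open>S - {a}\<close> contribute \<open>x\<^sub>\<preceq>\<^sub>a \<cdot> \<Prod>i\<in>S. 1 / x\<^sub>\<preceq>\<^sub>i\<close>. In a forest the
  elements above any element form a chain, so the down-sets of the maximal elements partition
  \<open>S\<close> and the sum of the \<open>x\<^sub>\<preceq>\<^sub>a\<close> over them is \<open>x(S)\<close>.
\<close>

definition linear_extension_lists :: "(nat \<times> nat) set \<Rightarrow> nat set \<Rightarrow> nat list set" where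
  "linear_extension_lists R S = {zs. distinct zs \<and> set zs = S \<and>
     (\<forall>i<length zs. \<forall>j<length zs. strictly_below R (zs ! i) (zs ! j) \<longrightarrow> i < j)}"

definition prefix_weight :: "('a \<Rightarrow> real) \<Rightarrow> 'a list \<Rightarrow> real" where
  "prefix_weight x zs = (\<Prod>i=1..length zs. 1 / sum_list (map x (take i zs)))"

definition down_set :: "(nat \<times> nat) set \<Rightarrow> nat \<Rightarrow> nat set" where
  "down_set R i = {j. (j, i) \<in> R}"

definition maximal_elements :: "(nat \<times> nat) set \<Rightarrow> nat set \<Rightarrow> nat set" where
  "maximal_elements R S = {a \<in> S. \<forall>b\<in>S. \<not> strictly_below R a b}"

lemma strictly_below_irrefl [simp]: "\<not> strictly_below R a a"
  by (simp add: strictly_below_def)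

lemma prefix_weight_snoc:
  "prefix_weight x (ys @ [a]) = prefix_weight x ys / sum_list (map x (ys @ [a]))"
proof -
  have "{1..Suc (length ys)} = insert (Suc (length ys)) {1..length ys}" by auto
  then have "prefix_weight x (ys @ [a]) = 1 / sum_list (map x (ys @ [a])) *
      (\<Prod>i=1..length ys. 1 / sum_list (map x (take i (ys @ [a]))))"
    unfolding prefix_weight_def by simp
  also have "(\<Prod>i=1..length ys. 1 / sum_list (map x (take i (ys @ [a])))) = prefix_weight x ys"
    unfolding prefix_weight_def by (rule prod.cong) auto
  finally show ?thesis by simp
qed

lemma prefix_weight_map_upt:
  "prefix_weight x (map \<pi> [1..<Suc n]) = (\<Prod>i=1..n. 1 / (\<Sum>k=1..i. x (\<pi> k)))"
  unfolding prefix_weight_def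
proof (rule prod.cong)
  fix i assume "i \<in> {1..n}"
  then have "take i (map \<pi> [1..<Suc n]) = map \<pi> [1..<Suc i]"
    by (simp del: upt_Suc add: take_map take_upt)
  moreover have "sum_list (map x (map \<pi> [1..<Suc i])) = (\<Sum>k=1..i. x (\<pi> k))"
    by (simp del: upt_Suc add: interv_sum_list_conv_sum_set_nat atLeastLessThanSuc_atLeastAtMost)
  ultimately show "1 / sum_list (map x (take i (map \<pi> [1..<Suc n]))) = 1 / (\<Sum>k=1..i. x (\<pi> k))"
    by (simp del: upt_Suc)
qed simp

lemma linear_extension_lists_empty: "linear_extension_lists R {} = {[]}"
  unfolding linear_extension_lists_def by auto

lemma finite_linear_extension_lists: "finite S \<Longrightarrow> finite (linear_extension_lists R S)"
proof -
  assume "finite S"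
  moreover have "linear_extension_lists R S \<subseteq> {zs. set zs \<subseteq> S \<and> length zs = card S}"
    unfolding linear_extension_lists_def using distinct_card by fastforce
  ultimately show ?thesis
    using finite_lists_length_eq finite_subset by blast
qed

lemma snoc_in_linear_extension_lists_iff:
  "ys @ [a] \<in> linear_extension_lists R S \<longleftrightarrow>
     a \<in> maximal_elements R S \<and> ys \<in> linear_extension_lists R (S - {a})"
proof -
  have order_snoc:
    "(\<forall>i<Suc (length ys). \<forall>j<Suc (length ys).
        strictly_below R ((ys @ [a]) ! i) ((ys @ [a]) ! j) \<longrightarrow> i < j) \<longleftrightarrow>
     (\<forall>i<length ys. \<forall>j<length ys. strictly_below R (ys ! i) (ys ! j) \<longrightarrow> i < j) \<and>
     (\<forall>b\<in>set ys. \<not> strictly_below R a b)"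
    by (auto simp: nth_append less_Suc_eq in_set_conv_nth) (metis less_irrefl nth_mem)+
  show ?thesis
    unfolding linear_extension_lists_def maximal_elements_def mem_Collect_eq
      length_append_singleton order_snoc
    by auto
qed

lemma sum_linear_extension_lists_by_last:
  assumes "finite S" and "S \<noteq> {}"
  shows "(\<Sum>zs\<in>linear_extension_lists R S. f zs) =
    (\<Sum>a\<in>maximal_elements R S. \<Sum>ys\<in>linear_extension_lists R (S - {a}). f (ys @ [a]))"
proof -
  let ?M = "maximal_elements R S"
  let ?snoc = "\<lambda>(a, ys). ys @ [a]"
  have "linear_extension_lists R S \<subseteq> ?snoc ` (SIGMA a:?M. linear_extension_lists R (S - {a}))"
  proof
    fix zs assume zs: "zs \<in> linear_extension_lists R S"
    then have "zs \<noteq> []"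
      using assms(2) by (auto simp: linear_extension_lists_def)
    then have "zs = butlast zs @ [last zs]" by simp
    with zs show "zs \<in> ?snoc ` (SIGMA a:?M. linear_extension_lists R (S - {a}))"
      by (metis (no_types, lifting) SigmaI case_prod_conv image_eqI snoc_in_linear_extension_lists_iff)
  qed
  then have image: "?snoc ` (SIGMA a:?M. linear_extension_lists R (S - {a})) = linear_extension_lists R S"
    using snoc_in_linear_extension_lists_iff by auto
  have "inj_on ?snoc (SIGMA a:?M. linear_extension_lists R (S - {a}))"
    by (auto simp: inj_on_def)
  then have "(\<Sum>zs\<in>linear_extension_lists R S. f zs) =
      (\<Sum>(a, ys)\<in>(SIGMA a:?M. linear_extension_lists R (S - {a})). f (ys @ [a]))"
    by (simp add: sum.reindex flip: image) (simp add: case_prod_unfold)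
  also have "\<dots> = (\<Sum>a\<in>?M. \<Sum>ys\<in>linear_extension_lists R (S - {a}). f (ys @ [a]))"
    using assms(1) by (subst sum.Sigma) (auto simp: maximal_elements_def finite_linear_extension_lists)
  finally show ?thesis .
qed

lemma maximal_down_sets_disjoint:
  assumes comparable: "\<And>i j k. (i, j) \<in> R \<Longrightarrow> (i, k) \<in> R \<Longrightarrow> (j, k) \<in> R \<or> (k, j) \<in> R"
    and "a \<in> maximal_elements R S" and "b \<in> maximal_elements R S" and "a \<noteq> b"
  shows "down_set R a \<inter> down_set R b = {}"
proof (rule ccontr)
  assume "down_set R a \<inter> down_set R b \<noteq> {}"
  then obtain j where "(j, a) \<in> R" "(j, b) \<in> R" by (auto simp: down_set_def)
  then have "(a, b) \<in> R \<or> (b, a) \<in> R" using comparable by blast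
  then show False
    using assms(2-4) unfolding maximal_elements_def strictly_below_def by auto
qed

lemma Union_maximal_down_sets:
  assumes "finite S" and "natural_labeling R" and "trans R"
    and "\<forall>i\<in>S. (i, i) \<in> R" and "\<forall>i\<in>S. down_set R i \<subseteq> S"
  shows "(\<Union>a\<in>maximal_elements R S. down_set R a) = S"
proof
  show "(\<Union>a\<in>maximal_elements R S. down_set R a) \<subseteq> S"
    using assms(5) by (auto simp: maximal_elements_def)
  show "S \<subseteq> (\<Union>a\<in>maximal_elements R S. down_set R a)"
  proof
    fix i assume "i \<in> S"
    define B where "B = {b \<in> S. (i, b) \<in> R}"
    have "finite B" "i \<in> B"
      using assms(1,4) \<open>i \<in> S\<close> by (auto simp: B_def)
    then have top: "Max B \<in> B" "\<And>c. c \<in> B \<Longrightarrow> c \<le> Max B"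
      by (auto intro: Max_in)
    \<comment> \<open>the natural labeling makes the largest label above \<open>i\<close> a maximal element\<close>
    have "Max B \<in> maximal_elements R S"
    proof -
      have "\<not> strictly_below R (Max B) c" if "c \<in> S" for c
      proof
        assume below: "strictly_below R (Max B) c"
        then have "c \<in> B"
          using top(1) \<open>trans R\<close> that unfolding B_def strictly_below_def by (blast dest: transD)
        then show False
          using top(2) below assms(2) by (fastforce simp: natural_labeling_def)
      qed
      then show ?thesis using top(1) by (simp add: maximal_elements_def B_def)
    qed
    moreover have "i \<in> down_set R (Max B)"
      using top(1) by (simp add: B_def down_set_def)
    ultimately show "i \<in> (\<Union>a\<in>maximal_elements R S. down_set R a)" by blast
  qed
qed

lemma sum_over_maximal_down_sets:
  assumes "finite S" and "natural_labeling R" and "trans R"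
    and comparable: "\<And>i j k. (i, j) \<in> R \<Longrightarrow> (i, k) \<in> R \<Longrightarrow> (j, k) \<in> R \<or> (k, j) \<in> R"
    and "\<forall>i\<in>S. (i, i) \<in> R" and "\<forall>i\<in>S. down_set R i \<subseteq> S"
  shows "sum x S = (\<Sum>a\<in>maximal_elements R S. sum x (down_set R a))"
proof -
  have "finite (maximal_elements R S)"
    using assms(1) by (simp add: maximal_elements_def)
  moreover have "\<forall>a\<in>maximal_elements R S. finite (down_set R a)"
    using assms(1,6) by (auto simp: maximal_elements_def intro: finite_subset)
  ultimately have "sum x (\<Union>a\<in>maximal_elements R S. down_set R a) =
      (\<Sum>a\<in>maximal_elements R S. sum x (down_set R a))"
    using maximal_down_sets_disjoint[OF comparable] by (intro sum.UNION_disjoint) auto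
  then show ?thesis
    using Union_maximal_down_sets[OF assms(1-3,5,6)] by simp
qed

lemma down_closed_remove_maximal:
  assumes "a \<in> maximal_elements R S" and "\<forall>i\<in>S. down_set R i \<subseteq> S"
  shows "\<forall>i\<in>S - {a}. down_set R i \<subseteq> S - {a}"
  using assms by (auto simp: maximal_elements_def down_set_def strictly_below_def)

lemma sum_down_set_pos:
  fixes x :: "nat \<Rightarrow> real"
  assumes "finite S" and "i \<in> S" and "(i, i) \<in> R" and "down_set R i \<subseteq> S"
    and "\<forall>j\<in>S. x j > 0"
  shows "sum x (down_set R i) > 0"
proof -
  have "finite (down_set R i)" using assms(1,4) by (rule finite_subset[rotated])
  moreover have "i \<in> down_set R i" using assms(3) by (simp add: down_set_def)
  ultimately show ?thesis
    using assms(4,5) by (intro sum_pos2[of _ i]) (auto simp: less_imp_le)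
qed

lemma sum_prefix_weight_snoc_maximal:
  assumes "a \<in> maximal_elements R S"
  shows "(\<Sum>ys\<in>linear_extension_lists R (S - {a}). prefix_weight x (ys @ [a])) =
    (\<Sum>ys\<in>linear_extension_lists R (S - {a}). prefix_weight x ys) / sum x S"
  unfolding sum_divide_distrib
proof (rule sum.cong[OF refl])
  fix ys assume "ys \<in> linear_extension_lists R (S - {a})"
  then have "ys @ [a] \<in> linear_extension_lists R S"
    using assms snoc_in_linear_extension_lists_iff by blast
  then have "sum_list (map x (ys @ [a])) = sum x S"
    unfolding linear_extension_lists_def by (auto simp: sum_list_distinct_conv_sum_set)
  then show "prefix_weight x (ys @ [a]) = prefix_weight x ys / sum x S"
    by (simp add: prefix_weight_snoc)
qed

lemma sum_prefix_weight_linear_extension_lists: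
  fixes x :: "nat \<Rightarrow> real"
  assumes "finite S" and "natural_labeling R" and "trans R"
    and comparable: "\<And>i j k. (i, j) \<in> R \<Longrightarrow> (i, k) \<in> R \<Longrightarrow> (j, k) \<in> R \<or> (k, j) \<in> R"
    and "\<forall>i\<in>S. (i, i) \<in> R" and "\<forall>i\<in>S. down_set R i \<subseteq> S" and "\<forall>i\<in>S. x i > 0"
  shows "(\<Sum>zs\<in>linear_extension_lists R S. prefix_weight x zs) =
    (\<Prod>i\<in>S. 1 / sum x (down_set R i))"
  using assms(1,5-7)
proof (induction S rule: finite_remove_induct)
  case empty
  then show ?case by (simp add: linear_extension_lists_empty prefix_weight_def)
next
  case (remove S)
  let ?M = "maximal_elements R S"
  let ?P = "\<lambda>T. \<Prod>i\<in>T. 1 / sum x (down_set R i)"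
  have removed: "(\<Sum>ys\<in>linear_extension_lists R (S - {a}). prefix_weight x ys) =
      sum x (down_set R a) * ?P S" if "a \<in> ?M" for a
  proof -
    have "a \<in> S" using that by (simp add: maximal_elements_def)
    have "(\<Sum>ys\<in>linear_extension_lists R (S - {a}). prefix_weight x ys) = ?P (S - {a})"
      using remove.IH[OF \<open>a \<in> S\<close>] down_closed_remove_maximal[OF that remove.prems(2)]
        remove.prems(1,3) by blast
    also have "\<dots> = sum x (down_set R a) * ?P S"
    proof -
      have "sum x (down_set R a) > 0"
        using sum_down_set_pos[OF remove.hyps(1) \<open>a \<in> S\<close>] remove.prems \<open>a \<in> S\<close> by blast
      then show ?thesis
        using prod.remove[OF remove.hyps(1) \<open>a \<in> S\<close>, of "\<lambda>i. 1 / sum x (down_set R i)"] by simp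
    qed
    finally show ?thesis .
  qed
  have "sum x S > 0"
    using remove.hyps(1,2) remove.prems(3) by (simp add: sum_pos)
  have "(\<Sum>zs\<in>linear_extension_lists R S. prefix_weight x zs) =
      (\<Sum>a\<in>?M. (\<Sum>ys\<in>linear_extension_lists R (S - {a}). prefix_weight x ys) / sum x S)"
    unfolding sum_linear_extension_lists_by_last[OF remove.hyps(1,2)]
    by (intro sum.cong refl sum_prefix_weight_snoc_maximal)
  also have "\<dots> = (\<Sum>a\<in>?M. sum x (down_set R a)) * ?P S / sum x S"
    by (simp add: removed sum_divide_distrib sum_distrib_right)
  also have "(\<Sum>a\<in>?M. sum x (down_set R a)) = sum x S"
    by (rule sum_over_maximal_down_sets[symmetric])
      (use remove.hyps(1) assms(2,3) comparable remove.prems(1,2) in blast)+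
  finally show ?case
    using \<open>sum x S > 0\<close> by simp
qed

lemma rooted_forest_cover_below:
  assumes "rooted_forest n R" and "natural_labeling R" and "strictly_below R i u"
  obtains c where "covered_by R i c" and "(c, u) \<in> R"
proof -
  have order: "partial_order_on {1..n} R"
    using assms(1) by (simp add: rooted_forest_def)
  have "u \<in> {1..n}"
    using assms(3) partial_order_onD(4)[OF order] by (auto simp: strictly_below_def)
  then have "(u, u) \<in> R"
    using partial_order_onD(1)[OF order] by (simp add: refl_on_def)
  define c where "c = (LEAST v. strictly_below R i v \<and> (v, u) \<in> R)"
  have c: "strictly_below R i c \<and> (c, u) \<in> R"
    unfolding c_def by (rule LeastI[of _ u]) (use assms(3) \<open>(u, u) \<in> R\<close> in simp)
  have "\<not> strictly_below R k c" if "strictly_below R i k" for k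
  proof
    assume "strictly_below R k c"
    then have "(k, u) \<in> R"
      using c partial_order_onD(2)[OF order] by (auto simp: strictly_below_def dest: transD)
    then have "c \<le> k"
      unfolding c_def using that by (simp add: Least_le)
    with \<open>strictly_below R k c\<close> assms(2) show False
      by (force simp: natural_labeling_def)
  qed
  with c have "covered_by R i c"
    by (auto simp: covered_by_def)
  with c that show ?thesis by blast
qed

lemma rooted_forest_upper_comparable:
  assumes "rooted_forest n R" and "natural_labeling R" and "(i, j) \<in> R" and "(i, k) \<in> R"
  shows "(j, k) \<in> R \<or> (k, j) \<in> R"
  using assms(3,4)
proof (induction "n - i" arbitrary: i rule: less_induct)
  case less
  show ?case
  proof (cases "j = i \<or> k = i")
    case True
    with less.prems show ?thesis by auto
  next
    case False
    with less.prems have "strictly_below R i j" "strictly_below R i k"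
      by (auto simp: strictly_below_def)
    then obtain c c' where "covered_by R i c" "(c, j) \<in> R" "covered_by R i c'" "(c', k) \<in> R"
      using rooted_forest_cover_below[OF assms(1,2)] by metis
    moreover have "i \<in> {1..n}" and field: "R \<subseteq> {1..n} \<times> {1..n}"
      using less.prems assms(1) partial_order_onD(4) by (fastforce simp: rooted_forest_def)+
    \<comment> \<open>the unique cover of \<open>i\<close> lies below both \<open>j\<close> and \<open>k\<close> and has a larger label\<close>
    ultimately have "c' = c" and "(c, k) \<in> R"
      using assms(1) unfolding rooted_forest_def by blast+
    moreover have "n - c < n - i"
      using \<open>covered_by R i c\<close> \<open>(c, j) \<in> R\<close> field assms(2)
      by (force simp: covered_by_def natural_labeling_def)
    ultimately show ?thesis
      using less.hyps \<open>covered_by R i c\<close> \<open>(c, j) \<in> R\<close> by blast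
  qed
qed

lemma bij_betw_permutes_lists:
  "bij_betw (\<lambda>\<pi>. map \<pi> [1..<Suc n]) {\<pi>. \<pi> permutes {1..n}} {zs. distinct zs \<and> set zs = {1..n}}"
proof (rule bij_betw_byWitness[where f' = "\<lambda>zs k. if k \<in> {1..n} then zs ! (k - 1) else k"])
  show "\<forall>\<pi>\<in>{\<pi>. \<pi> permutes {1..n}}. (\<lambda>k. if k \<in> {1..n} then map \<pi> [1..<Suc n] ! (k - 1) else k) = \<pi>"
    by (auto simp del: upt_Suc simp: permutes_not_in intro!: ext)
  show "\<forall>zs\<in>{zs. distinct zs \<and> set zs = {1..n}}.
      map (\<lambda>k. if k \<in> {1..n} then zs ! (k - 1) else k) [1..<Suc n] = zs"
  proof
    fix zs assume "zs \<in> {zs. distinct zs \<and> set zs = {1..n}}"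
    then have "length zs = n"
      using distinct_card by fastforce
    then show "map (\<lambda>k. if k \<in> {1..n} then zs ! (k - 1) else k) [1..<Suc n] = zs"
      by (intro nth_equalityI) (simp_all del: upt_Suc)
  qed
  show "(\<lambda>\<pi>. map \<pi> [1..<Suc n]) ` {\<pi>. \<pi> permutes {1..n}} \<subseteq> {zs. distinct zs \<and> set zs = {1..n}}"
    by (auto simp del: upt_Suc simp: distinct_map permutes_inj_on permutes_image
        atLeastLessThanSuc_atLeastAtMost)
  show "(\<lambda>zs k. if k \<in> {1..n} then zs ! (k - 1) else k) ` {zs. distinct zs \<and> set zs = {1..n}}
      \<subseteq> {\<pi>. \<pi> permutes {1..n}}"
  proof clarify
    fix zs :: "nat list" assume "distinct zs" and "set zs = {1..n}"
    then have "length zs = n"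
      using distinct_card by fastforce
    have "bij_betw (\<lambda>k. k - 1) {1..n} {..<n}"
      by (rule bij_betw_byWitness[where f' = Suc]) auto
    moreover have "bij_betw ((!) zs) {..<n} {1..n}"
      using \<open>distinct zs\<close> \<open>set zs = {1..n}\<close> \<open>length zs = n\<close> by (intro bij_betw_nth) auto
    ultimately have "bij_betw ((!) zs \<circ> (\<lambda>k. k - 1)) {1..n} {1..n}"
      by (rule bij_betw_trans)
    then have "bij_betw (\<lambda>k. if k \<in> {1..n} then zs ! (k - 1) else k) {1..n} {1..n}"
      by (rule bij_betw_cong[THEN iffD1, rotated]) simp
    then show "(\<lambda>k. if k \<in> {1..n} then zs ! (k - 1) else k) permutes {1..n}"
      by (rule bij_imp_permutes) auto
  qed
qed

lemma linear_extension_order_iff: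
  assumes perm: "\<pi> permutes {1..n}" and field: "R \<subseteq> {1..n} \<times> {1..n}"
  shows "(\<forall>i j. strictly_below R i j \<longrightarrow> inv \<pi> i < inv \<pi> j) \<longleftrightarrow>
    (\<forall>i<n. \<forall>j<n. strictly_below R (\<pi> (Suc i)) (\<pi> (Suc j)) \<longrightarrow> i < j)"
proof
  assume extension: "\<forall>i j. strictly_below R i j \<longrightarrow> inv \<pi> i < inv \<pi> j"
  show "\<forall>i<n. \<forall>j<n. strictly_below R (\<pi> (Suc i)) (\<pi> (Suc j)) \<longrightarrow> i < j"
  proof (intro allI impI)
    fix i j assume "strictly_below R (\<pi> (Suc i)) (\<pi> (Suc j))"
    with extension have "inv \<pi> (\<pi> (Suc i)) < inv \<pi> (\<pi> (Suc j))" by blast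
    then show "i < j" by (simp add: permutes_inverses(2)[OF perm])
  qed
next
  assume lists: "\<forall>i<n. \<forall>j<n. strictly_below R (\<pi> (Suc i)) (\<pi> (Suc j)) \<longrightarrow> i < j"
  show "\<forall>i j. strictly_below R i j \<longrightarrow> inv \<pi> i < inv \<pi> j"
  proof (intro allI impI)
    fix a b assume below: "strictly_below R a b"
    then have "a \<in> {1..n}" "b \<in> {1..n}"
      using field by (auto simp: strictly_below_def)
    then have range: "inv \<pi> a \<in> {1..n}" "inv \<pi> b \<in> {1..n}"
      using permutes_in_image[OF permutes_inv[OF perm]] by blast+
    then have "strictly_below R (\<pi> (Suc (inv \<pi> a - 1))) (\<pi> (Suc (inv \<pi> b - 1)))"
      using below by (simp add: permutes_inverses(1)[OF perm])
    moreover have "inv \<pi> a - 1 < n" "inv \<pi> b - 1 < n"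
      using range by auto
    ultimately have "inv \<pi> a - 1 < inv \<pi> b - 1"
      using lists by blast
    then show "inv \<pi> a < inv \<pi> b" by linarith
  qed
qed

lemma bij_betw_linear_extensions_lists:
  assumes "R \<subseteq> {1..n} \<times> {1..n}"
  shows "bij_betw (\<lambda>\<pi>. map \<pi> [1..<Suc n]) (linear_extensions n R) (linear_extension_lists R {1..n})"
proof -
  have "bij_betw (\<lambda>\<pi>. map \<pi> [1..<Suc n])
      {\<pi> \<in> {\<pi>. \<pi> permutes {1..n}}. \<forall>i j. strictly_below R i j \<longrightarrow> inv \<pi> i < inv \<pi> j}
      {zs \<in> {zs. distinct zs \<and> set zs = {1..n}}.
        \<forall>i<length zs. \<forall>j<length zs. strictly_below R (zs ! i) (zs ! j) \<longrightarrow> i < j}"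
    by (rule bij_betw_Collect[OF bij_betw_permutes_lists])
      (simp del: upt_Suc add: linear_extension_order_iff[OF _ assms])
  then show ?thesis
    unfolding linear_extensions_def linear_extension_lists_def by (simp only: mem_Collect_eq conj_assoc)
qed

lemma partition_Z_mult_weight_w:
  fixes x :: "nat \<Rightarrow> real"
  assumes "\<And>i. i \<in> {1..n} \<Longrightarrow> x i > 0"
  shows "partition_Z n R x * weight_w n x \<pi> =
    (\<Prod>i=1..n. sum x (down_set R i)) * prefix_weight x (map \<pi> [1..<Suc n])"
proof -
  have "(\<Sum>j=1..i. x j) > 0" if "i \<in> {1..n}" for i
    using that assms by (intro sum_pos) auto
  then have "partition_Z n R x * weight_w n x \<pi> =
      (\<Prod>i=1..n. sum x (down_set R i) * (1 / (\<Sum>k=1..i. x (\<pi> k))))"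
    unfolding partition_Z_def weight_w_def down_set_def prod.distrib[symmetric]
    by (intro prod.cong) fastforce+
  also have "\<dots> = (\<Prod>i=1..n. sum x (down_set R i)) * prefix_weight x (map \<pi> [1..<Suc n])"
    unfolding prefix_weight_map_upt by (rule prod.distrib)
  finally show ?thesis .
qed

theorem theorem5p1:
  fixes n :: nat and R :: "(nat \<times> nat) set" and x :: "nat \<Rightarrow> real"
  assumes "rooted_forest n R"
    and "natural_labeling R"
    and "\<And>i. i \<in> {1..n} \<Longrightarrow> x i > 0"
  shows "(\<Sum>\<pi>\<in>linear_extensions n R. partition_Z n R x * weight_w n x \<pi>) = 1"
proof -
  have order: "partial_order_on {1..n} R"
    using assms(1) by (simp add: rooted_forest_def)
  have field: "R \<subseteq> {1..n} \<times> {1..n}" and "trans R" and refl: "\<forall>i\<in>{1..n}. (i, i) \<in> R"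
    using partial_order_onD[OF order] by (auto simp: refl_on_def)
  have down_closed: "\<forall>i\<in>{1..n}. down_set R i \<subseteq> {1..n}"
    using field by (auto simp: down_set_def)
  have pos: "sum x (down_set R i) > 0" if "i \<in> {1..n}" for i
    using that refl down_closed assms(3) by (intro sum_down_set_pos[OF finite_atLeastAtMost]) auto
  have "(\<Sum>\<pi>\<in>linear_extensions n R. partition_Z n R x * weight_w n x \<pi>) =
      (\<Prod>i=1..n. sum x (down_set R i)) *
      (\<Sum>\<pi>\<in>linear_extensions n R. prefix_weight x (map \<pi> [1..<Suc n]))"
    using partition_Z_mult_weight_w[OF assms(3)] by (simp add: sum_distrib_left)
  also have "(\<Sum>\<pi>\<in>linear_extensions n R. prefix_weight x (map \<pi> [1..<Suc n])) =
      (\<Sum>zs\<in>linear_extension_lists R {1..n}. prefix_weight x zs)"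
    by (rule sum.reindex_bij_betw[OF bij_betw_linear_extensions_lists[OF field]])
  also have "\<dots> = (\<Prod>i=1..n. 1 / sum x (down_set R i))"
    by (rule sum_prefix_weight_linear_extension_lists[OF finite_atLeastAtMost assms(2) \<open>trans R\<close>
        rooted_forest_upper_comparable[OF assms(1,2)] refl down_closed]) (use assms(3) in auto)
  also have "(\<Prod>i=1..n. sum x (down_set R i)) * \<dots> = 1"
    by (simp add: prod.distrib[symmetric]) (rule prod.neutral, use pos in fastforce)
  finally show ?thesis .
qed

end
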